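(* Consider a run of Algorithm 1 (described in the context). Let $I_j$ be a correcting interval. Then at the time $I_j$ is bisected, $f(I_j)\subset Y_j$.
   Context: Problem. Fix $L>0$ and $T\ge 2$. An adversary fixes an unknown $L$-Lipschitz $f:[0,1]\to[0,L]$. In each round $t=1,\dots,T$: the adversary chooses $x_t\in[0,1]$; the learner observes $x_t$ and guesses $q_t$; the adversary observes $q_t$ and sends $\sigma_t\in\{0,1\}$, equal to $\sigma(q_t-f(x_t))$ in uncorrupted rounds and $1-\sigma(q_t-f(x_t))$ in corrupted rounds, where $\sigma(u)=1$ if $u>0$ and $0$ if $u\le 0$; the adversary chooses adaptively which rounds to corrupt, at most $C$ in total ($C$ unknown to the learner). $\mathtt{len}(I)$ is the length of an interval $I$. $\mathtt{MidpointQuery}(I,Y)$, $Y=[a,b]$: guess $q=(a+b)/2$; if $\sigma_t=1$ return $Y\cap[0,q+L\,\mathtt{len}(I)]$, if $\sigma_t=0$ return $Y\cap[q-L\,\mathtt{len}(I),L]$. Algorithm 1. Maintain a partition of $[0,1]$ into intervals; each $I_j$ carries a checking interval $S_j$, range $Y_j$, and a "dubious" flag (initially unset). Initially: $8$ intervals of length $1/8$ (the root intervals), each with $S_j=Y_j=[0,L]$. In round $t$, with $I_j$ the partition interval containing $x_t$: (i) if some endpoint of $S_j$ has not been guessed in a round whose context lay in $I_j$, guess such an endpoint; if the guess was $\min(S_j)$ with $\sigma_t=1$ or $\max(S_j)$ with $\sigma_t=0$, mark $I_j$ dubious; once both endpoints have been queried, set $Y_j=[0,L]$ if dubious and otherwise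 $Y_j=[\min(S_j)-L\,\mathtt{len}(I_j),\max(S_j)+L\,\mathtt{len}(I_j)]\cap[0,L]$. (ii) Otherwise set $Y_j:=\mathtt{MidpointQuery}(I_j,Y_j)$; if then $\mathtt{len}(Y_j)<\max(4L\,\mathtt{len}(I_j),4L/T)$, bisect $I_j$ into its two halves (its children, of which $I_j$ is the parent), which replace it, each with checking interval equal to the current $Y_j$ (endpoints unqueried, not dubious). Interval types. Say a round $t$ lies in $I_j$ if $I_j$ is the partition interval containing $x_t$ at round $t$. An interval $I_j$ is corrupted if some round lying in $I_j$ has a corrupted signal; it is correcting if its parent is corrupted and every round lying in $I_j$ is uncorrupted; it is safe if it is a root interval or its parent is safe or correcting, and every round lying in $I_j$ is uncorrupted. *)

theory Defs
  imports "HOL-Analysis.Analysis"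
begin

text \<open>Model of Algorithm 1.  A partition interval is the dyadic interval
  [idx/2^dep, (idx+1)/2^dep]; root intervals have dep = 3.  Each node carries its
  checking interval S = [smin, smax], its range Y = [ylo, yhi], flags recording
  whether min S / max S have been guessed in a round lying in it, and the dubious flag.\<close>

record node =
  dep  :: nat
  idx  :: nat
  smin :: real
  smax :: real
  ylo  :: real
  yhi  :: real
  qmin :: bool
  qmax :: bool
  dub  :: bool

definition ivlo :: "node \<Rightarrow> real" where
  "ivlo N = real (idx N) / 2 ^ dep N"

definition ivhi :: "node \<Rightarrow> real" where
  "ivhi N = real (Suc (idx N)) / 2 ^ dep N"

definition ivlen :: "node \<Rightarrow> real" where
  "ivlen N = ivhi N - ivlo N"

definition ival :: "node \<Rightarrow> real set" where
  "ival N = {ivlo N .. ivhi N}"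

definition contains :: "node \<Rightarrow> real \<Rightarrow> bool" where
  "contains N z \<longleftrightarrow> ivlo N \<le> z \<and> (z < ivhi N \<or> ivhi N = 1)"

definition signal :: "(real \<Rightarrow> real) \<Rightarrow> bool \<Rightarrow> real \<Rightarrow> real \<Rightarrow> bool" where
  "signal f cor z q = ((q - f z > 0) \<noteq> cor)"

definition init_part :: "real \<Rightarrow> node list" where
  "init_part L = map (\<lambda>k. \<lparr>dep = 3, idx = k, smin = 0, smax = L, ylo = 0, yhi = L,
                             qmin = False, qmax = False, dub = False\<rparr>) [0..<8]"

text \<open>Returns the updated node and whether it is bisected.  The boolean ch selects,
  when both endpoints of S are still unqueried, whether min S is guessed first.\<close>
definition process :: "real \<Rightarrow> nat \<Rightarrow> (real \<Rightarrow> real) \<Rightarrow> real \<Rightarrow> bool \<Rightarrow> bool \<Rightarrow> node \<Rightarrow> node \<times> bool" where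
  "process L T f z cor ch N =
    (if \<not> (qmin N \<and> qmax N) then
       (let q = (if \<not> qmin N \<and> (qmax N \<or> ch) then smin N else smax N);
            s = signal f cor z q;
            qm = (qmin N \<or> q = smin N);
            qM = (qmax N \<or> q = smax N);
            d = (dub N \<or> (q = smin N \<and> s) \<or> (q = smax N \<and> \<not> s));
            N1 = N\<lparr>qmin := qm, qmax := qM, dub := d\<rparr>
        in (if qm \<and> qM then
              (if d then N1\<lparr>ylo := 0, yhi := L\<rparr>
               else N1\<lparr>ylo := max (smin N - L * ivlen N) 0,
                       yhi := min (smax N + L * ivlen N) L\<rparr>)
            else N1, False))
     else
       (let q = (ylo N + yhi N) / 2;
            s = signal f cor z q;
            N1 = (if s then N\<lparr>ylo := max (ylo N) 0, yhi := min (yhi N) (q + L * ivlen N)\<rparr>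
                  else N\<lparr>ylo := max (ylo N) (q - L * ivlen N), yhi := min (yhi N) L\<rparr>)
        in (N1, yhi N1 - ylo N1 < max (4 * L * ivlen N) (4 * L / real T))))"

definition children :: "node \<Rightarrow> node list" where
  "children N =
     [\<lparr>dep = Suc (dep N), idx = 2 * idx N, smin = ylo N, smax = yhi N, ylo = ylo N, yhi = yhi N,
       qmin = False, qmax = False, dub = False\<rparr>,
      \<lparr>dep = Suc (dep N), idx = 2 * idx N + 1, smin = ylo N, smax = yhi N, ylo = ylo N, yhi = yhi N,
       qmin = False, qmax = False, dub = False\<rparr>]"

definition step :: "real \<Rightarrow> nat \<Rightarrow> (real \<Rightarrow> real) \<Rightarrow> real \<Rightarrow> bool \<Rightarrow> bool \<Rightarrow> node list \<Rightarrow> node list" where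
  "step L T f z cor ch P =
    (case find (\<lambda>N. contains N z) P of
       None \<Rightarrow> P
     | Some N \<Rightarrow>
         (let (N', b) = process L T f z cor ch N
          in concat (map (\<lambda>M. if (dep M, idx M) = (dep N, idx N)
                               then (if b then children N' else [N']) else [M]) P)))"

text \<open>Run: rounds are 1,2,...; x t is the context, c t says whether round t is corrupted,
  ch t is the learner's tie-breaking choice.  run t is the partition after round t.\<close>
primrec run :: "real \<Rightarrow> nat \<Rightarrow> (real \<Rightarrow> real) \<Rightarrow> (nat \<Rightarrow> real) \<Rightarrow> (nat \<Rightarrow> bool) \<Rightarrow> (nat \<Rightarrow> bool) \<Rightarrow> nat \<Rightarrow> node list" where
  "run L T f x c ch 0 = init_part L"
| "run L T f x c ch (Suc t) = step L T f (x (Suc t)) (c (Suc t)) (ch (Suc t)) (run L T f x c ch t)"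

text \<open>The partition interval containing x t at round t (t \<ge> 1).\<close>
definition cur :: "real \<Rightarrow> nat \<Rightarrow> (real \<Rightarrow> real) \<Rightarrow> (nat \<Rightarrow> real) \<Rightarrow> (nat \<Rightarrow> bool) \<Rightarrow> (nat \<Rightarrow> bool) \<Rightarrow> nat \<Rightarrow> node" where
  "cur L T f x c ch t = the (find (\<lambda>N. contains N (x t)) (run L T f x c ch (t - 1)))"

definition lies :: "real \<Rightarrow> nat \<Rightarrow> (real \<Rightarrow> real) \<Rightarrow> (nat \<Rightarrow> real) \<Rightarrow> (nat \<Rightarrow> bool) \<Rightarrow> (nat \<Rightarrow> bool) \<Rightarrow> nat \<Rightarrow> nat \<times> nat" where
  "lies L T f x c ch t = (dep (cur L T f x c ch t), idx (cur L T f x c ch t))"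

definition corrupted_iv :: "real \<Rightarrow> nat \<Rightarrow> (real \<Rightarrow> real) \<Rightarrow> (nat \<Rightarrow> real) \<Rightarrow> (nat \<Rightarrow> bool) \<Rightarrow> (nat \<Rightarrow> bool) \<Rightarrow> nat \<times> nat \<Rightarrow> bool" where
  "corrupted_iv L T f x c ch I \<longleftrightarrow> (\<exists>t\<in>{1..T}. lies L T f x c ch t = I \<and> c t)"

definition parent_iv :: "nat \<times> nat \<Rightarrow> nat \<times> nat" where
  "parent_iv I = (fst I - 1, snd I div 2)"

definition correcting_iv :: "real \<Rightarrow> nat \<Rightarrow> (real \<Rightarrow> real) \<Rightarrow> (nat \<Rightarrow> real) \<Rightarrow> (nat \<Rightarrow> bool) \<Rightarrow> (nat \<Rightarrow> bool) \<Rightarrow> nat \<times> nat \<Rightarrow> bool" where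
  "correcting_iv L T f x c ch I \<longleftrightarrow>
     fst I > 3 \<and> corrupted_iv L T f x c ch (parent_iv I) \<and>
     (\<forall>t\<in>{1..T}. lies L T f x c ch t = I \<longrightarrow> \<not> c t)"

definition upd :: "real \<Rightarrow> nat \<Rightarrow> (real \<Rightarrow> real) \<Rightarrow> (nat \<Rightarrow> real) \<Rightarrow> (nat \<Rightarrow> bool) \<Rightarrow> (nat \<Rightarrow> bool) \<Rightarrow> nat \<Rightarrow> node \<times> bool" where
  "upd L T f x c ch t = process L T f (x t) (c t) (ch t) (cur L T f x c ch t)"

end

theory Submission
  imports Defs
begin

(* Invariant: for an interval in which no corrupted round has lain so far, once min S (resp. max S)
   has been guessed without the interval turning dubious, f reaches at least min S (resp. at most
   max S) somewhere on I, and once both have been guessed, f(I) is contained in Y.  A truthful answer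
   to a check provides the witness; with both witnesses, Lipschitz continuity keeps f(I) within
   L len(I) of S, which is the range Y then receives, while a dubious interval gets Y = [0, L].
   A truthful midpoint answer at z in I only cuts Y at q +- L len(I) on the side excluded by f(z),
   and children start with nothing guessed.  An interval is bisected only after both checks, so the
   invariant gives the claim; of "correcting" only the absence of corrupted rounds in I is used. *)

lemma ival_cong: "dep M = dep N \<Longrightarrow> idx M = idx N \<Longrightarrow> ival M = ival N"
  unfolding ival_def ivlo_def ivhi_def by simp

lemma contains_cong: "dep M = dep N \<Longrightarrow> idx M = idx N \<Longrightarrow> contains M z = contains N z"
  unfolding contains_def ivlo_def ivhi_def by simp

lemma contains_imp_in_ival: "contains N z \<Longrightarrow> z \<le> 1 \<Longrightarrow> z \<in> ival N"
  unfolding contains_def ival_def by auto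

lemma ival_subset_unit: "idx N < 2 ^ dep N \<Longrightarrow> ival N \<subseteq> {0..1}"
proof -
  assume "idx N < 2 ^ dep N"
  then have "real (Suc (idx N)) \<le> 2 ^ dep N"
    by (metis Suc_leI of_nat_le_iff of_nat_numeral of_nat_power)
  then show ?thesis unfolding ival_def ivlo_def ivhi_def by (auto simp: divide_simps)
qed

lemma oscillation_on_ival:
  assumes "0 \<le> L"
    and lip: "\<forall>u\<in>{0..1}. \<forall>v\<in>{0..1}. \<bar>f u - f v\<bar> \<le> L * \<bar>u - v\<bar>"
    and "ival N \<subseteq> {0..1}" and "u \<in> ival N" and "v \<in> ival N"
  shows "\<bar>f u - f v\<bar> \<le> L * ivlen N"
proof -
  have "\<bar>f u - f v\<bar> \<le> L * \<bar>u - v\<bar>" using assms lip by blast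
  also have "\<dots> \<le> L * ivlen N"
    using assms by (intro mult_left_mono) (auto simp: ival_def ivlen_def)
  finally show ?thesis .
qed

lemma children_idx_bound: "idx N < 2 ^ dep N \<Longrightarrow> M \<in> set (children N) \<Longrightarrow> idx M < 2 ^ dep M"
  unfolding children_def by auto

lemma children_cover:
  assumes "contains N z"
  shows "\<exists>M\<in>set (children N). contains M z"
proof -
  define m where "m = real (2 * idx N + 1) / 2 ^ Suc (dep N)"
  obtain M1 M2 where M: "children N = [M1, M2]"
    and M1: "ivlo M1 = ivlo N" "ivhi M1 = m" and M2: "ivlo M2 = m" "ivhi M2 = ivhi N"
    unfolding children_def ivlo_def ivhi_def m_def by (simp add: divide_simps)
  show ?thesis
  proof (cases "z < m")
    case True
    then have "contains M1 z" using assms M1 unfolding contains_def by simp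
    then show ?thesis using M by simp
  next
    case False
    then have "contains M2 z" using assms M2 unfolding contains_def by simp
    then show ?thesis using M by simp
  qed
qed

lemma init_part_cover:
  assumes z: "z \<in> {0..1::real}"
  shows "\<exists>N\<in>set (init_part L). contains N z"
proof -
  define k :: nat where "k = (if z = 1 then 7 else nat \<lfloor>8 * z\<rfloor>)"
  have k_lt: "k < 8" and k_le: "real k \<le> 8 * z" and k_gt: "z = 1 \<or> 8 * z < real k + 1"
    and k_one: "z = 1 \<Longrightarrow> k = 7"
    using z unfolding k_def by (auto simp: nat_less_iff)
  let ?N = "\<lparr>dep = 3, idx = k, smin = 0, smax = L, ylo = 0, yhi = L,
              qmin = False, qmax = False, dub = False\<rparr>"
  have "contains ?N z"
    using k_le k_gt k_one unfolding contains_def ivlo_def ivhi_def by (auto simp: divide_simps mult.commute)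
  then show ?thesis using k_lt unfolding init_part_def by force
qed

definition node_sound :: "(real \<Rightarrow> real) \<Rightarrow> node \<Rightarrow> bool" where
  "node_sound f N \<longleftrightarrow>
     (qmin N \<and> \<not> dub N \<longrightarrow> (\<exists>z\<in>ival N. smin N \<le> f z)) \<and>
     (qmax N \<and> \<not> dub N \<longrightarrow> (\<exists>z\<in>ival N. f z \<le> smax N)) \<and>
     (qmin N \<and> qmax N \<longrightarrow> f ` ival N \<subseteq> {ylo N .. yhi N})"

lemma dep_process [simp]: "dep (fst (process L T f z cor ch N)) = dep N"
  unfolding process_def Let_def by auto

lemma idx_process [simp]: "idx (fst (process L T f z cor ch N)) = idx N"
  unfolding process_def Let_def by auto

lemma smin_process [simp]: "smin (fst (process L T f z cor ch N)) = smin N"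
  unfolding process_def Let_def by auto

lemma smax_process [simp]: "smax (fst (process L T f z cor ch N)) = smax N"
  unfolding process_def Let_def by auto

lemma ival_process [simp]: "ival (fst (process L T f z cor ch N)) = ival N"
  by (rule ival_cong) simp_all

lemma ival_update_range [simp]: "ival (N\<lparr>ylo := a, yhi := b\<rparr>) = ival N"
  by (rule ival_cong) simp_all

lemma process_keeps_checked:
  "qmin N \<Longrightarrow> qmax N \<Longrightarrow> qmin (fst (process L T f z cor ch N)) \<and> qmax (fst (process L T f z cor ch N))"
  unfolding process_def Let_def by auto

lemma process_bisects_only_checked: "snd (process L T f z cor ch N) \<Longrightarrow> qmin N \<and> qmax N"
  unfolding process_def Let_def by (auto split: if_splits)

lemma process_sound_midpoint:
  assumes checked: "qmin N" "qmax N"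
    and osc: "\<And>u v. u \<in> ival N \<Longrightarrow> v \<in> ival N \<Longrightarrow> \<bar>f u - f v\<bar> \<le> L * ivlen N"
    and range: "f ` ival N \<subseteq> {0..L}"
    and z: "z \<in> ival N" and sound: "node_sound f N" and "\<not> cor"
  shows "node_sound f (fst (process L T f z cor ch N))"
proof -
  define q where "q = (ylo N + yhi N) / 2"
  have Y: "f ` ival N \<subseteq> {ylo N .. yhi N}" using sound checked unfolding node_sound_def by blast
  show ?thesis
  proof (cases "f z < q")
    case True
    have "fst (process L T f z cor ch N) =
        N\<lparr>ylo := max (ylo N) 0, yhi := min (yhi N) (q + L * ivlen N)\<rparr>"
      using checked True \<open>\<not> cor\<close> unfolding process_def signal_def q_def Let_def by simp
    moreover have "f u \<le> q + L * ivlen N" if "u \<in> ival N" for u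
      using osc[OF that z] True by linarith
    ultimately show ?thesis using sound Y range
      by (auto simp: node_sound_def image_subset_iff)
  next
    case False
    have "fst (process L T f z cor ch N) =
        N\<lparr>ylo := max (ylo N) (q - L * ivlen N), yhi := min (yhi N) L\<rparr>"
      using checked False \<open>\<not> cor\<close> unfolding process_def signal_def q_def Let_def by simp
    moreover have "q - L * ivlen N \<le> f u" if "u \<in> ival N" for u
      using osc[OF that z] False by linarith
    ultimately show ?thesis using sound Y range
      by (auto simp: node_sound_def image_subset_iff)
  qed
qed

lemma process_sound_checking:
  assumes open_checks: "\<not> (qmin N \<and> qmax N)"
    and osc: "\<And>u v. u \<in> ival N \<Longrightarrow> v \<in> ival N \<Longrightarrow> \<bar>f u - f v\<bar> \<le> L * ivlen N"
    and range: "f ` ival N \<subseteq> {0..L}"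
    and z: "z \<in> ival N" and sound: "node_sound f N" and "\<not> cor"
  shows "node_sound f (fst (process L T f z cor ch N))"
proof -
  define q where "q = (if \<not> qmin N \<and> (qmax N \<or> ch) then smin N else smax N)"
  define N' where "N' = fst (process L T f z cor ch N)"
  have qmin': "qmin N' = (qmin N \<or> q = smin N)"
    and qmax': "qmax N' = (qmax N \<or> q = smax N)"
    and dub': "dub N' = (dub N \<or> (q = smin N \<and> f z < q) \<or> (q = smax N \<and> \<not> f z < q))"
    using open_checks \<open>\<not> cor\<close> unfolding N'_def process_def signal_def q_def Let_def by auto
  have Y': "qmin N' \<Longrightarrow> qmax N' \<Longrightarrow> ylo N' = (if dub N' then 0 else max (smin N - L * ivlen N) 0) \<and>
      yhi N' = (if dub N' then L else min (smax N + L * ivlen N) L)"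
    using open_checks \<open>\<not> cor\<close> unfolding N'_def process_def signal_def q_def Let_def by auto
  have min_witness: "qmin N' \<and> \<not> dub N' \<longrightarrow> (\<exists>u\<in>ival N. smin N \<le> f u)"
    using sound z unfolding qmin' dub' node_sound_def by force
  have max_witness: "qmax N' \<and> \<not> dub N' \<longrightarrow> (\<exists>u\<in>ival N. f u \<le> smax N)"
    using sound z unfolding qmax' dub' node_sound_def by force
  have "f ` ival N \<subseteq> {ylo N' .. yhi N'}" if checked': "qmin N'" "qmax N'"
  proof (cases "dub N'")
    case True
    then show ?thesis using Y'[OF checked'] range by simp
  next
    case False
    then obtain u1 u2 where u1: "u1 \<in> ival N" "smin N \<le> f u1" and u2: "u2 \<in> ival N" "f u2 \<le> smax N"
      using min_witness max_witness checked' by blast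
    have "smin N - L * ivlen N \<le> f u \<and> f u \<le> smax N + L * ivlen N" if "u \<in> ival N" for u
      using osc[OF that u1(1)] osc[OF that u2(1)] u1(2) u2(2) by linarith
    then show ?thesis using Y'[OF checked'] False range by (auto simp: image_subset_iff)
  qed
  then show ?thesis using min_witness max_witness unfolding N'_def node_sound_def by simp
qed

lemma process_sound:
  assumes "\<And>u v. u \<in> ival N \<Longrightarrow> v \<in> ival N \<Longrightarrow> \<bar>f u - f v\<bar> \<le> L * ivlen N"
    and "f ` ival N \<subseteq> {0..L}" and "z \<in> ival N" and "node_sound f N" and "\<not> cor"
  shows "node_sound f (fst (process L T f z cor ch N))"
  using process_sound_midpoint[OF _ _ assms] process_sound_checking[OF _ assms] by blast

lemma children_sound: "M \<in> set (children N) \<Longrightarrow> node_sound f M"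
  unfolding children_def node_sound_def by auto

definition wf_partition :: "node list \<Rightarrow> bool" where
  "wf_partition P \<longleftrightarrow>
     (\<forall>z\<in>{0..1}. \<exists>N\<in>set P. contains N z) \<and> (\<forall>N\<in>set P. idx N < 2 ^ dep N)"

lemma set_step:
  assumes "find (\<lambda>N. contains N z) P = Some N0"
  shows "set (step L T f z cor ch P) =
    {M \<in> set P. (dep M, idx M) \<noteq> (dep N0, idx N0)} \<union>
    (if snd (process L T f z cor ch N0) then set (children (fst (process L T f z cor ch N0)))
     else {fst (process L T f z cor ch N0)})"
proof -
  have "N0 \<in> set P" using assms by (auto simp: find_Some_iff)
  obtain N' b where "process L T f z cor ch N0 = (N', b)" by fastforce
  with \<open>N0 \<in> set P\<close> show ?thesis unfolding step_def assms by (auto split: if_splits)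
qed

lemma wf_partition_init_part: "wf_partition (init_part L)"
  using init_part_cover unfolding wf_partition_def by (auto simp: init_part_def)

lemma wf_partition_find:
  assumes "wf_partition P" and "z \<in> {0..1}"
  obtains N where "find (\<lambda>N. contains N z) P = Some N" and "N \<in> set P" and "contains N z"
proof -
  obtain M where "M \<in> set P" "contains M z" using assms unfolding wf_partition_def by blast
  then obtain N where "find (\<lambda>N. contains N z) P = Some N" by (metis find_None_iff option.exhaust)
  moreover from this have "N \<in> set P" "contains N z" by (auto simp: find_Some_iff)
  ultimately show thesis using that by blast
qed

lemma wf_partition_step:
  assumes wf: "wf_partition P"
  shows "wf_partition (step L T f z cor ch P)"
proof (cases "find (\<lambda>N. contains N z) P")
  case None
  then show ?thesis using wf by (simp add: step_def)
next
  case (Some N0)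
  then have N0: "N0 \<in> set P" "idx N0 < 2 ^ dep N0" using wf by (auto simp: find_Some_iff wf_partition_def)
  let ?N' = "fst (process L T f z cor ch N0)"
  have cover: "\<exists>N\<in>set (step L T f z cor ch P). contains N z'" if z': "z' \<in> {0..1}" for z'
  proof -
    obtain M where M: "M \<in> set P" "contains M z'" using wf z' unfolding wf_partition_def by blast
    show ?thesis
    proof (cases "(dep M, idx M) = (dep N0, idx N0)")
      case True
      then have "contains ?N' z'" using M(2) contains_cong[of ?N' M] by simp
      then show ?thesis using children_cover[of ?N' z'] unfolding set_step[OF Some]
        by (cases "snd (process L T f z cor ch N0)") auto
    next
      case False
      then show ?thesis using M unfolding set_step[OF Some] by blast
    qed
  qed
  have "idx N < 2 ^ dep N" if N: "N \<in> set (step L T f z cor ch P)" for N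
  proof -
    consider "N \<in> set P" | "N = ?N'" | "N \<in> set (children ?N')"
      using N unfolding set_step[OF Some] by (cases "snd (process L T f z cor ch N0)") auto
    then show ?thesis
    proof cases
      case 1
      then show ?thesis using wf unfolding wf_partition_def by blast
    next
      case 2
      then show ?thesis using N0(2) by simp
    next
      case 3
      then show ?thesis using N0(2) children_idx_bound[of ?N' N] by simp
    qed
  qed
  with cover show ?thesis unfolding wf_partition_def by blast
qed

lemma wf_partition_run: "wf_partition (run L T f x c ch t)"
  by (induction t) (simp_all add: wf_partition_init_part wf_partition_step)

lemma find_run_cur:
  assumes "\<forall>s\<in>{1..T}. x s \<in> {0..1}" and "t < T"
  shows "find (\<lambda>N. contains N (x (Suc t))) (run L T f x c ch t) = Some (cur L T f x c ch (Suc t))"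
    and "cur L T f x c ch (Suc t) \<in> set (run L T f x c ch t)"
    and "contains (cur L T f x c ch (Suc t)) (x (Suc t))"
proof -
  have "x (Suc t) \<in> {0..1}" using assms by simp
  then obtain N where "find (\<lambda>N. contains N (x (Suc t))) (run L T f x c ch t) = Some N"
    and "N \<in> set (run L T f x c ch t)" and "contains N (x (Suc t))"
    by (rule wf_partition_find[OF wf_partition_run])
  then show "find (\<lambda>N. contains N (x (Suc t))) (run L T f x c ch t) = Some (cur L T f x c ch (Suc t))"
    and "cur L T f x c ch (Suc t) \<in> set (run L T f x c ch t)"
    and "contains (cur L T f x c ch (Suc t)) (x (Suc t))"
    unfolding cur_def by simp_all
qed

lemma set_run_Suc:
  assumes "\<forall>s\<in>{1..T}. x s \<in> {0..1}" and "t < T"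
  shows "set (run L T f x c ch (Suc t)) =
    {M \<in> set (run L T f x c ch t). (dep M, idx M) \<noteq> lies L T f x c ch (Suc t)} \<union>
    (if snd (upd L T f x c ch (Suc t)) then set (children (fst (upd L T f x c ch (Suc t))))
     else {fst (upd L T f x c ch (Suc t))})"
  using set_step[OF find_run_cur(1)[OF assms]] unfolding upd_def lies_def by simp

lemma upd_sound:
  assumes "0 \<le> L"
    and lip: "\<forall>u\<in>{0..1}. \<forall>v\<in>{0..1}. \<bar>f u - f v\<bar> \<le> L * \<bar>u - v\<bar>"
    and range: "\<forall>u\<in>{0..1}. f u \<in> {0..L}"
    and xs: "\<forall>s\<in>{1..T}. x s \<in> {0..1}" and "t < T"
    and sound: "node_sound f (cur L T f x c ch (Suc t))" and "\<not> c (Suc t)"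
  shows "node_sound f (fst (upd L T f x c ch (Suc t)))"
proof -
  let ?N = "cur L T f x c ch (Suc t)"
  have "idx ?N < 2 ^ dep ?N"
    using find_run_cur(2)[OF xs \<open>t < T\<close>] wf_partition_run unfolding wf_partition_def by blast
  then have unit: "ival ?N \<subseteq> {0..1}" by (rule ival_subset_unit)
  have "x (Suc t) \<in> ival ?N"
    using find_run_cur(3)[OF xs \<open>t < T\<close>] xs \<open>t < T\<close> by (simp add: contains_imp_in_ival)
  with unit show ?thesis
    unfolding upd_def
    using process_sound[OF oscillation_on_ival[OF \<open>0 \<le> L\<close> lip unit] _ _ sound \<open>\<not> c (Suc t)\<close>] range
    by blast
qed

definition uncorrupted_upto ::
    "real \<Rightarrow> nat \<Rightarrow> (real \<Rightarrow> real) \<Rightarrow> (nat \<Rightarrow> real) \<Rightarrow> (nat \<Rightarrow> bool) \<Rightarrow> (nat \<Rightarrow> bool) \<Rightarrow>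
      nat \<Rightarrow> nat \<times> nat \<Rightarrow> bool" where
  "uncorrupted_upto L T f x c ch t I \<longleftrightarrow> (\<forall>s\<in>{1..t}. lies L T f x c ch s = I \<longrightarrow> \<not> c s)"

lemma uncorrupted_upto_mono:
  "s \<le> t \<Longrightarrow> uncorrupted_upto L T f x c ch t I \<Longrightarrow> uncorrupted_upto L T f x c ch s I"
  unfolding uncorrupted_upto_def by auto

lemma run_sound:
  assumes "0 \<le> L"
    and lip: "\<forall>u\<in>{0..1}. \<forall>v\<in>{0..1}. \<bar>f u - f v\<bar> \<le> L * \<bar>u - v\<bar>"
    and range: "\<forall>u\<in>{0..1}. f u \<in> {0..L}"
    and xs: "\<forall>s\<in>{1..T}. x s \<in> {0..1}"
  shows "t \<le> T \<Longrightarrow> N \<in> set (run L T f x c ch t) \<Longrightarrow>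
    uncorrupted_upto L T f x c ch t (dep N, idx N) \<Longrightarrow> node_sound f N"
proof (induction t arbitrary: N)
  case 0
  then show ?case by (auto simp: init_part_def node_sound_def)
next
  case (Suc t)
  have "t < T" using Suc.prems(1) by simp
  have IH: "node_sound f M" if "M \<in> set (run L T f x c ch t)"
      and "uncorrupted_upto L T f x c ch t (dep M, idx M)" for M
    using Suc.IH Suc.prems(1) that by simp
  let ?I = "lies L T f x c ch (Suc t)"
  consider "N \<in> set (run L T f x c ch t)" "(dep N, idx N) \<noteq> ?I"
    | "N = fst (upd L T f x c ch (Suc t))" | "N \<in> set (children (fst (upd L T f x c ch (Suc t))))"
    using Suc.prems(2) unfolding set_run_Suc[OF xs \<open>t < T\<close>] by (auto split: if_splits)
  then show ?case
  proof cases
    case 1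
    then show ?thesis using IH uncorrupted_upto_mono[OF le_SucI Suc.prems(3)] by simp
  next
    case 2
    then have "(dep N, idx N) = ?I" by (simp add: upd_def lies_def)
    then have "\<not> c (Suc t)" and "uncorrupted_upto L T f x c ch t ?I"
      using Suc.prems(3) uncorrupted_upto_mono[OF le_SucI Suc.prems(3)]
      by (auto simp: uncorrupted_upto_def)
    then have "node_sound f (cur L T f x c ch (Suc t))"
      using IH find_run_cur(2)[OF xs \<open>t < T\<close>] by (simp add: lies_def)
    then show ?thesis using 2 upd_sound[OF \<open>0 \<le> L\<close> lip range xs \<open>t < T\<close>] \<open>\<not> c (Suc t)\<close> by simp
  next
    case 3
    then show ?thesis by (rule children_sound)
  qed
qed

theorem lemma22:
  fixes L :: real and T C t :: nat and f :: "real \<Rightarrow> real"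
    and x :: "nat \<Rightarrow> real" and c ch :: "nat \<Rightarrow> bool"
  assumes "L > 0" and "T \<ge> 2"
    and "\<forall>u\<in>{0..1}. \<forall>v\<in>{0..1}. \<bar>f u - f v\<bar> \<le> L * \<bar>u - v\<bar>"
    and "\<forall>u\<in>{0..1}. f u \<in> {0..L}"
    and "\<forall>s\<in>{1..T}. x s \<in> {0..1}"
    and "card {s\<in>{1..T}. c s} \<le> C"
    and "t \<in> {1..T}"
    and "correcting_iv L T f x c ch (lies L T f x c ch t)"
    and "snd (upd L T f x c ch t)"
  shows "f ` ival (cur L T f x c ch t) \<subseteq>
           {ylo (fst (upd L T f x c ch t)) .. yhi (fst (upd L T f x c ch t))}"
proof -
  obtain t' where t: "t = Suc t'" using assms(7) by (cases t) auto
  have "0 \<le> L" using \<open>L > 0\<close> by simp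
  have "t' < T" using assms(7) t by simp
  have unc: "uncorrupted_upto L T f x c ch t (lies L T f x c ch t)"
    using assms(7,8) unfolding correcting_iv_def uncorrupted_upto_def by auto
  then have "uncorrupted_upto L T f x c ch t' (lies L T f x c ch t)"
    using t uncorrupted_upto_mono[OF le_SucI] by blast
  moreover have "cur L T f x c ch t \<in> set (run L T f x c ch t')"
    using find_run_cur(2)[OF assms(5) \<open>t' < T\<close>] t by simp
  ultimately have "node_sound f (cur L T f x c ch t)"
    using run_sound[OF \<open>0 \<le> L\<close> assms(3-5) less_imp_le[OF \<open>t' < T\<close>]] by (simp add: lies_def)
  moreover have "\<not> c t" using unc assms(7) by (simp add: uncorrupted_upto_def)
  ultimately have "node_sound f (fst (upd L T f x c ch t))"
    using upd_sound[OF \<open>0 \<le> L\<close> assms(3-5) \<open>t' < T\<close>] t by simp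
  moreover have "qmin (fst (upd L T f x c ch t)) \<and> qmax (fst (upd L T f x c ch t))"
    using process_keeps_checked process_bisects_only_checked assms(9) unfolding upd_def by blast
  ultimately show ?thesis unfolding node_sound_def upd_def by simp
qed

end
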